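(* Let $n\ge 1$, let $x_1,\dots,x_n$ be distinct integers each greater than $1$, and let $D=\{1,0,x_1,\dots,x_n\}$. If $(T,s)$ is an optimal signed tree realizing $D$, then there is exactly one edge $e$ of $T$ with $s(e)=-$.
   Context: A signed tree is a pair $(T,s)$ where $T$ is a finite tree and $s:E(T)\to\{+,-\}$. The signed degree $sdeg(v)$ of a vertex is the number of incident positive edges minus the number of incident negative edges. $(T,s)$ realizes $D$ if $D=\{sdeg(v):v\in V(T)\}$. $\sigma(D)=\min\{|V(T)|: \text{some signed tree }(T,s)\text{ realizes }D\}$, and a signed tree $(T,s)$ realizing $D$ is optimal if $|V(T)|=\sigma(D)$. *)

theory Defs
  imports Main
begin

text \<open>A finite tree is a nonempty finite connected graph
  with card E = card V - 1 (equivalently, connected and acyclic).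
  A sign function s maps each edge to True (positive) or False (negative).\<close>

definition adj :: "'a set set \<Rightarrow> ('a \<times> 'a) set" where
  "adj E = {(u, v). {u, v} \<in> E}"

definition is_tree :: "'a set \<Rightarrow> 'a set set \<Rightarrow> bool" where
  "is_tree V E \<longleftrightarrow>
     finite V \<and> V \<noteq> {} \<and>
     (\<forall>e\<in>E. \<exists>u v. e = {u, v} \<and> u \<noteq> v \<and> u \<in> V \<and> v \<in> V) \<and>
     (\<forall>u\<in>V. \<forall>v\<in>V. (u, v) \<in> (adj E)\<^sup>*) \<and>
     card E = card V - 1"

definition sdeg :: "'a set set \<Rightarrow> ('a set \<Rightarrow> bool) \<Rightarrow> 'a \<Rightarrow> int" where
  "sdeg E s v = int (card {e\<in>E. v \<in> e \<and> s e}) - int (card {e\<in>E. v \<in> e \<and> \<not> s e})"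

definition realizes :: "'a set \<Rightarrow> 'a set set \<Rightarrow> ('a set \<Rightarrow> bool) \<Rightarrow> int set \<Rightarrow> bool" where
  "realizes V E s D \<longleftrightarrow> is_tree V E \<and> D = sdeg E s ` V"

text \<open>sigma D: least number of vertices of a signed tree realizing D
  (trees labelled by naturals; every finite tree is isomorphic to one).\<close>
definition sigma :: "int set \<Rightarrow> nat" where
  "sigma D = (LEAST k. \<exists>(V::nat set) E s. realizes V E s D \<and> card V = k)"

definition optimal :: "nat set \<Rightarrow> nat set set \<Rightarrow> (nat set \<Rightarrow> bool) \<Rightarrow> int set \<Rightarrow> bool" where
  "optimal V E s D \<longleftrightarrow> realizes V E s D \<and> card V = sigma D"

end

theory Submission
  imports Defs
begin

text \<open>
  In a signed tree with \<open>q\<close> negative edges the signed degrees sum to \<open>2(|V| - 1) - 4q\<close>.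
  If the tree realizes \<open>{1, 0} \<union> A\<close> with all \<open>a \<in> A\<close> at least 2, every signed degree is
  nonnegative: the vertices realizing the values of \<open>A\<close> contribute \<open>\<Sum>A\<close>, every other
  vertex of nonzero signed degree contributes at least 1, and a vertex of signed degree 0 lies on a
  negative edge, so there are at most \<open>2q\<close> of those. Hence \<open>|V| \<ge> \<Sum>(a - 1) + 2 + 2q\<close>.
  Conversely, the path with one negative middle edge, with \<open>a - 1\<close> positive leaves attached for
  each \<open>a\<close>, realizes the set with \<open>4 + \<Sum>(a - 1)\<close> vertices. An optimal tree therefore has
  \<open>q \<le> 1\<close>, and \<open>q \<ge> 1\<close> because some vertex has signed degree 0.
\<close>

lemma adj_iff [simp]: "(u, v) \<in> adj E \<longleftrightarrow> {u, v} \<in> E"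
  by (simp add: adj_def)

lemma is_tree_finite: "is_tree V E \<Longrightarrow> finite V"
  by (simp add: is_tree_def)

lemma is_tree_edge: "is_tree V E \<Longrightarrow> e \<in> E \<Longrightarrow> e \<subseteq> V \<and> card e = 2"
  unfolding is_tree_def by fastforce

lemma is_tree_finite_edges: "is_tree V E \<Longrightarrow> finite E"
  by (meson PowI finite_Pow_iff finite_subset is_tree_edge is_tree_finite subsetI)

lemma is_tree_card_edges: "is_tree V E \<Longrightarrow> card E = card V - 1"
  by (simp add: is_tree_def)

lemma is_tree_single: "is_tree {v} {}"
  by (simp add: is_tree_def)

lemma is_tree_add_leaf:
  assumes T: "is_tree V E" and u: "u \<in> V" and w: "w \<notin> V"
  shows "is_tree (insert w V) (insert {u, w} E)"
proof -
  let ?E' = "insert {u, w} E"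
  have "(a, b) \<in> (adj ?E')\<^sup>*" if "a \<in> V" "b \<in> V" for a b
    using T that rtrancl_mono[of "adj E" "adj ?E'"] unfolding is_tree_def by (auto simp: adj_def)
  moreover have "(u, w) \<in> (adj ?E')\<^sup>*" "(w, u) \<in> (adj ?E')\<^sup>*"
    by (auto simp: insert_commute)
  ultimately have "(a, u) \<in> (adj ?E')\<^sup>* \<and> (u, a) \<in> (adj ?E')\<^sup>*" if "a \<in> insert w V" for a
    using that u by blast
  then have conn: "(a, b) \<in> (adj ?E')\<^sup>*" if "a \<in> insert w V" "b \<in> insert w V" for a b
    using that by (meson rtrancl_trans)
  have "{u, w} \<notin> E"
    using is_tree_edge[OF T] w by blast
  moreover have "0 < card V"
    using is_tree_finite[OF T] u by (auto simp: card_gt_0_iff)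
  ultimately have "card ?E' = card V"
    using is_tree_finite_edges[OF T] is_tree_card_edges[OF T] by simp
  moreover have "\<forall>e\<in>?E'. \<exists>a b. e = {a, b} \<and> a \<noteq> b \<and> a \<in> insert w V \<and> b \<in> insert w V"
    using T u w unfolding is_tree_def by blast
  ultimately show ?thesis
    using T w conn unfolding is_tree_def by simp
qed

lemma is_tree_attach_leaves:
  assumes "is_tree V E" "l \<in> V" "finite F" "F \<inter> V = {}"
  shows "is_tree (V \<union> F) (E \<union> (\<lambda>f. {l, f}) ` F)"
  using assms(3,4)
proof (induction F rule: finite_induct)
  case empty
  show ?case
    using assms(1) by simp
next
  case (insert f F)
  then have "is_tree (insert f (V \<union> F)) (insert {l, f} (E \<union> (\<lambda>f. {l, f}) ` F))"
    using assms(2) by (intro is_tree_add_leaf) auto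
  then show ?case
    by simp
qed

lemma sdeg_empty [simp]: "sdeg {} s v = 0"
  by (simp add: sdeg_def)

lemma sdeg_insert:
  assumes "finite E" "e \<notin> E"
  shows "sdeg (insert e E) s v = sdeg E s v + (if v \<in> e then if s e then 1 else -1 else 0)"
proof -
  have "{x \<in> insert e E. P x} = (if P e then insert e {x \<in> E. P x} else {x \<in> E. P x})" for P
    by auto
  then show ?thesis
    using assms by (simp add: sdeg_def)
qed

lemma is_tree_sdeg_outside:
  assumes "is_tree V E" "v \<notin> V"
  shows "sdeg E s v = 0"
proof -
  have no_edges: "{e \<in> E. v \<in> e \<and> s e} = {}" "{e \<in> E. v \<in> e \<and> \<not> s e} = {}"
    using assms is_tree_edge by blast+
  show ?thesis
    unfolding sdeg_def no_edges by simp
qed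

lemma sdeg_attach_leaves:
  assumes "finite E" "\<forall>e\<in>E. e \<subseteq> V" "l \<in> V"
    and "finite F" "F \<inter> V = {}" "\<forall>f\<in>F. s {l, f}"
  shows "sdeg (E \<union> (\<lambda>f. {l, f}) ` F) s v
           = sdeg E s v + (if v = l then int (card F) else if v \<in> F then 1 else 0)"
  using assms(4-6)
proof (induction F rule: finite_induct)
  case empty
  show ?case
    by simp
next
  case (insert f F)
  have "{l, f} \<notin> E \<union> (\<lambda>f. {l, f}) ` F"
    using assms(2,3) insert by (auto simp: doubleton_eq_iff)
  then show ?case
    using insert assms(1,3) by (auto simp: sdeg_insert)
qed

lemma sdeg_image_attach_leaves:
  assumes T: "is_tree V E" and l: "l \<in> V" "sdeg E s l = 1"
    and F: "finite F" "F \<inter> V = {}" "F \<noteq> {}" and pos: "\<forall>f\<in>F. s {l, f}"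
  shows "sdeg (E \<union> (\<lambda>f. {l, f}) ` F) s ` (V \<union> F) = insert (1 + int (card F)) (sdeg E s ` V)"
proof -
  let ?E' = "E \<union> (\<lambda>f. {l, f}) ` F"
  have sdeg_E': "sdeg ?E' s v = sdeg E s v + (if v = l then int (card F) else if v \<in> F then 1 else 0)" for v
    using T l F pos by (intro sdeg_attach_leaves) (auto dest: is_tree_edge intro: is_tree_finite_edges)
  have "sdeg ?E' s ` (V - {l}) = sdeg E s ` (V - {l})"
    using F(2) by (intro image_cong) (auto simp: sdeg_E')
  moreover have "sdeg ?E' s f = 1" if "f \<in> F" for f
  proof -
    have "f \<notin> V"
      using F(2) that by blast
    then show ?thesis
      using l that by (auto simp: sdeg_E' is_tree_sdeg_outside[OF T])
  qed
  then have "sdeg ?E' s ` F = {1}"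
    using F(3) by auto
  moreover have "sdeg ?E' s l = 1 + int (card F)"
    using l by (simp add: sdeg_E')
  moreover have "V \<union> F = insert l ((V - {l}) \<union> F)"
    using l by auto
  ultimately have "sdeg ?E' s ` (V \<union> F) = insert (1 + int (card F)) (insert 1 (sdeg E s ` (V - {l})))"
    by (simp add: image_Un)
  also have "\<dots> = insert (1 + int (card F)) (sdeg E s ` V)"
    using l by (metis image_insert insert_Diff)
  finally show ?thesis .
qed

definition path_sign :: "nat set \<Rightarrow> bool" where
  "path_sign e \<longleftrightarrow> e \<noteq> {1, 2}"

lemma path_realizes_one_zero:
  "is_tree {..<4::nat} {{0, 1}, {1, 2}, {2, 3}} \<and> sdeg {{0, 1}, {1, 2}, {2, 3}} path_sign ` {..<4} = {1, 0}"
proof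
  have "is_tree (insert 3 (insert 2 (insert 1 {0::nat}))) (insert {2, 3} (insert {1, 2} (insert {0, 1} {})))"
    by (intro is_tree_add_leaf is_tree_single) auto
  moreover have "{..<4::nat} = {0, 1, 2, 3}"
    by auto
  ultimately show "is_tree {..<4::nat} {{0, 1}, {1, 2}, {2, 3}}"
    by (simp add: insert_commute)
  show "sdeg {{0, 1}, {1, 2}, {2, 3}} path_sign ` {..<4::nat} = {1, 0}"
    by (simp add: \<open>{..<4::nat} = {0, 1, 2, 3}\<close> sdeg_insert path_sign_def doubleton_eq_iff insert_commute)
qed

text \<open>The invariant \<open>V = {..<card V}\<close> supplies fresh labels for the new leaves, and these
  keep the value 1 realized after their centre has been raised to \<open>a\<close>.\<close>

lemma path_sign_realization:
  fixes A :: "int set"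
  assumes "finite A" "\<forall>a\<in>A. 2 \<le> a"
  shows "\<exists>V E. is_tree V E \<and> V = {..<card V} \<and> int (card V) = 4 + (\<Sum>a\<in>A. a - 1)
           \<and> sdeg E path_sign ` V = {1, 0} \<union> A"
  using assms
proof (induction A rule: finite_induct)
  case empty
  then show ?case
    using path_realizes_one_zero by (intro exI) auto
next
  case (insert a A)
  then obtain V E where T: "is_tree V E" and V: "V = {..<card V}"
    and card_V: "int (card V) = 4 + (\<Sum>a\<in>A. a - 1)" and img: "sdeg E path_sign ` V = {1, 0} \<union> A"
    by auto
  obtain l where l: "l \<in> V" "sdeg E path_sign l = 1"
    using img by (metis Un_iff imageE insertI1)
  define N where "N = card V"
  define F where "F = {N..<N + nat (a - 1)}"
  have V_N: "V = {..<N}"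
    using V by (simp add: N_def)
  have F: "finite F" "F \<inter> V = {}" "F \<noteq> {}" "int (card F) = a - 1"
    using insert.prems by (auto simp: F_def V_N)
  have "V \<union> F = {..<N + nat (a - 1)}"
    by (auto simp: F_def V_N)
  then have VF: "V \<union> F = {..<card (V \<union> F)}" "card (V \<union> F) = N + nat (a - 1)"
    by simp_all
  have "0 \<le> (\<Sum>a\<in>A. a - 1)"
    using insert.prems by (intro sum_nonneg) auto
  then have "\<forall>f\<in>F. f \<notin> {1, 2}"
    using card_V by (auto simp: F_def N_def)
  then have "\<forall>f\<in>F. path_sign {l, f}"
    by (auto simp: path_sign_def doubleton_eq_iff)
  then have "sdeg (E \<union> (\<lambda>f. {l, f}) ` F) path_sign ` (V \<union> F) = {1, 0} \<union> insert a A"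
    using sdeg_image_attach_leaves[OF T l F(1-3)] F(4) img by auto
  moreover have "int (card (V \<union> F)) = 4 + (\<Sum>a\<in>insert a A. a - 1)"
    using VF card_V insert by (simp add: N_def)
  moreover have "is_tree (V \<union> F) (E \<union> (\<lambda>f. {l, f}) ` F)"
    using T l F by (intro is_tree_attach_leaves)
  ultimately show ?case
    using VF by blast
qed

lemma sigma_le_card: "realizes (V :: nat set) E s D \<Longrightarrow> sigma D \<le> card V"
  unfolding sigma_def by (intro Least_le) blast

lemma sigma_upper_bound:
  fixes A :: "int set"
  assumes "finite A" "\<forall>a\<in>A. 2 \<le> a"
  shows "int (sigma ({1, 0} \<union> A)) \<le> 4 + (\<Sum>a\<in>A. a - 1)"
proof -
  obtain V E where "is_tree V E" "V = {..<card V}" "int (card V) = 4 + (\<Sum>a\<in>A. a - 1)"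
    "sdeg E path_sign ` V = {1, 0} \<union> A"
    using path_sign_realization[OF assms] by blast
  then show ?thesis
    using sigma_le_card[of V E path_sign] by (simp add: realizes_def)
qed

lemma sum_card_incident_edges:
  assumes "finite V" "\<forall>e\<in>F. e \<subseteq> V"
  shows "(\<Sum>v\<in>V. card {e \<in> F. v \<in> e}) = (\<Sum>e\<in>F. card e)"
proof -
  have "finite F"
    using assms by (meson Pow_iff finite_Pow_iff finite_subset subsetI)
  then have "(\<Sum>v\<in>V. card {e \<in> F. v \<in> e}) = (\<Sum>v\<in>V. \<Sum>e\<in>F. if v \<in> e then 1 else 0)"
    by (simp add: sum.inter_filter[symmetric])
  also have "\<dots> = (\<Sum>e\<in>F. \<Sum>v\<in>V. if v \<in> e then 1 else 0)"
    by (rule sum.swap)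
  also have "\<dots> = (\<Sum>e\<in>F. card {v \<in> V. v \<in> e})"
    using assms(1) by (simp add: sum.inter_filter[symmetric])
  also have "\<dots> = (\<Sum>e\<in>F. card e)"
    using assms(2) by (intro sum.cong refl arg_cong[where f = card]) auto
  finally show ?thesis .
qed

lemma sum_sdeg:
  assumes "finite V" "\<forall>e\<in>E. e \<subseteq> V \<and> card e = 2"
  shows "(\<Sum>v\<in>V. sdeg E s v) = 2 * int (card {e \<in> E. s e}) - 2 * int (card {e \<in> E. \<not> s e})"
proof -
  define P where "P = {e \<in> E. s e}"
  define Q where "Q = {e \<in> E. \<not> s e}"
  have incident: "(\<Sum>v\<in>V. card {e \<in> F. v \<in> e}) = 2 * card F" if "F \<subseteq> E" for F
  proof -
    have "(\<Sum>v\<in>V. card {e \<in> F. v \<in> e}) = (\<Sum>e\<in>F. card e)"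
      using assms that by (intro sum_card_incident_edges) auto
    also have "\<dots> = (\<Sum>e\<in>F. 2)"
      using assms that by (intro sum.cong) auto
    finally show ?thesis
      by simp
  qed
  have "{e \<in> P. v \<in> e} = {e \<in> E. v \<in> e \<and> s e}"
    and "{e \<in> Q. v \<in> e} = {e \<in> E. v \<in> e \<and> \<not> s e}" for v
    by (auto simp: P_def Q_def)
  then have "sdeg E s v = int (card {e \<in> P. v \<in> e}) - int (card {e \<in> Q. v \<in> e})" for v
    by (simp add: sdeg_def)
  then have "(\<Sum>v\<in>V. sdeg E s v)
      = int (\<Sum>v\<in>V. card {e \<in> P. v \<in> e}) - int (\<Sum>v\<in>V. card {e \<in> Q. v \<in> e})"
    by (simp add: sum_subtractf)
  also have "\<dots> = 2 * int (card P) - 2 * int (card Q)"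
    using incident[of P] incident[of Q] by (simp add: P_def Q_def)
  finally show ?thesis
    by (simp add: P_def Q_def)
qed

lemma sum_sdeg_tree:
  assumes "is_tree V E"
  shows "(\<Sum>v\<in>V. sdeg E s v) = 2 * int (card V) - 2 - 4 * int (card {e \<in> E. \<not> s e})"
proof -
  have "card {e \<in> E. s e} + card {e \<in> E. \<not> s e} = card ({e \<in> E. s e} \<union> {e \<in> E. \<not> s e})"
    using is_tree_finite_edges[OF assms] by (intro card_Un_disjoint[symmetric]) auto
  also have "{e \<in> E. s e} \<union> {e \<in> E. \<not> s e} = E"
    by blast
  finally have "card {e \<in> E. s e} + card {e \<in> E. \<not> s e} = card E" .
  moreover have "0 < card V"
    using assms by (simp add: is_tree_def card_gt_0_iff)
  moreover have "(\<Sum>v\<in>V. sdeg E s v) = 2 * int (card {e \<in> E. s e}) - 2 * int (card {e \<in> E. \<not> s e})"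
    using assms by (intro sum_sdeg) (auto dest: is_tree_finite is_tree_edge)
  ultimately show ?thesis
    using is_tree_card_edges[OF assms] by linarith
qed

lemma is_tree_vertex_in_edge:
  assumes T: "is_tree V E" and "2 \<le> card V" "v \<in> V"
  shows "\<exists>e\<in>E. v \<in> e"
proof -
  have "1 \<le> card (V - {v})"
    using \<open>2 \<le> card V\<close> \<open>v \<in> V\<close> by simp
  then have "V - {v} \<noteq> {}"
    by (metis card.empty not_one_le_zero)
  then obtain w where w: "w \<in> V" "w \<noteq> v"
    by blast
  then have "(v, w) \<in> (adj E)\<^sup>*"
    using T \<open>v \<in> V\<close> by (simp add: is_tree_def)
  then obtain u where "(v, u) \<in> adj E"
    using w(2) by (metis converse_rtranclE)
  then show ?thesis
    by auto
qed

lemma sdeg_eq_0_imp_negative_edge: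
  assumes "finite E" "e \<in> E" "v \<in> e" "sdeg E s v = 0"
  shows "\<exists>e\<in>E. v \<in> e \<and> \<not> s e"
proof (rule ccontr)
  assume "\<not> ?thesis"
  then have negative: "{e \<in> E. v \<in> e \<and> \<not> s e} = {}"
    and positive: "{e \<in> E. v \<in> e \<and> s e} = {e \<in> E. v \<in> e}"
    by auto
  have "card {e \<in> E. v \<in> e} = 0"
    using assms(4) unfolding sdeg_def negative positive by simp
  then show False
    using assms(1-3) by auto
qed

lemma is_tree_sdeg_eq_0_imp_negative_edge:
  assumes T: "is_tree V E" and "2 \<le> card V" "v \<in> V" "sdeg E s v = 0"
  shows "\<exists>e\<in>E. v \<in> e \<and> \<not> s e"
proof -
  obtain e where "e \<in> E" "v \<in> e"
    using is_tree_vertex_in_edge[OF T \<open>2 \<le> card V\<close> \<open>v \<in> V\<close>] by blast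
  then show ?thesis
    using sdeg_eq_0_imp_negative_edge[OF is_tree_finite_edges[OF T]] \<open>sdeg E s v = 0\<close> by blast
qed

lemma card_sdeg_eq_0_le:
  assumes T: "is_tree V E" and "2 \<le> card V"
  shows "card {v \<in> V. sdeg E s v = 0} \<le> 2 * card {e \<in> E. \<not> s e}"
proof -
  let ?Q = "{e \<in> E. \<not> s e}"
  have "{v \<in> V. sdeg E s v = 0} \<subseteq> \<Union>?Q"
    using is_tree_sdeg_eq_0_imp_negative_edge[OF assms] by blast
  moreover have "\<Union>?Q \<subseteq> V"
    using is_tree_edge[OF T] by blast
  then have "finite (\<Union>?Q)"
    using is_tree_finite[OF T] by (rule finite_subset)
  ultimately have "card {v \<in> V. sdeg E s v = 0} \<le> card (\<Union>?Q)"
    by (rule card_mono[rotated])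
  also have "\<dots> \<le> (\<Sum>e\<in>?Q. card e)"
    by (rule card_Union_le_sum_card)
  also have "\<dots> = (\<Sum>e\<in>?Q. 2)"
    using is_tree_edge[OF T] by (intro sum.cong) auto
  finally show ?thesis
    by simp
qed

lemma card_nonzero_le_sum:
  fixes f :: "'a \<Rightarrow> int"
  assumes "finite S" "\<forall>v\<in>S. 0 \<le> f v"
  shows "int (card {v \<in> S. f v \<noteq> 0}) \<le> (\<Sum>v\<in>S. f v)"
proof -
  have "int (card {v \<in> S. f v \<noteq> 0}) = (\<Sum>v\<in>S. if f v \<noteq> 0 then 1 else 0)"
    using assms(1) by (simp add: sum.inter_filter[symmetric])
  also have "\<dots> \<le> (\<Sum>v\<in>S. f v)"
    using assms(2) by (intro sum_mono) auto
  finally show ?thesis .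
qed

lemma is_tree_card_lower_bound:
  assumes T: "is_tree V E" and "2 \<le> card V" and nonneg: "\<forall>v\<in>V. 0 \<le> sdeg E s v"
    and A: "A \<subseteq> sdeg E s ` V"
  shows "(\<Sum>a\<in>A. a - 1) + 2 + 2 * int (card {e \<in> E. \<not> s e}) \<le> int (card V)"
proof -
  let ?d = "sdeg E s"
  let ?Z = "{v \<in> V. ?d v = 0}"
  define W where "W = inv_into V ?d ` A"
  have fin: "finite V" "finite A"
    using is_tree_finite[OF T] A finite_surj by blast+
  have inj: "inj_on (inv_into V ?d) A"
    using A by (rule inj_on_inv_into)
  have W: "W \<subseteq> V" "finite W" "card W = card A"
    using A fin inj by (auto simp: W_def inv_into_into card_image)
  have "(\<Sum>v\<in>W. ?d v) = (\<Sum>a\<in>A. ?d (inv_into V ?d a))"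
    unfolding W_def using inj by (simp add: sum.reindex)
  also have "\<dots> = (\<Sum>a\<in>A. a)"
    using A by (intro sum.cong) (auto simp: f_inv_into_f)
  finally have sum_W: "(\<Sum>v\<in>W. ?d v) = (\<Sum>a\<in>A. a)" .
  have "card (V - W) \<le> card ({v \<in> V - W. ?d v \<noteq> 0} \<union> ?Z)"
    using fin by (intro card_mono) auto
  also have "\<dots> \<le> card {v \<in> V - W. ?d v \<noteq> 0} + card ?Z"
    by (rule card_Un_le)
  finally have "card (V - W) \<le> card {v \<in> V - W. ?d v \<noteq> 0} + card ?Z" .
  moreover have "int (card {v \<in> V - W. ?d v \<noteq> 0}) \<le> (\<Sum>v\<in>V - W. ?d v)"
    using fin nonneg by (intro card_nonzero_le_sum) auto
  moreover have "card (V - W) = card V - card A"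
    using W by (simp add: card_Diff_subset)
  moreover have "(\<Sum>v\<in>V. ?d v) = (\<Sum>v\<in>V - W. ?d v) + (\<Sum>v\<in>W. ?d v)"
    using W fin by (simp add: sum.subset_diff)
  moreover have "(\<Sum>a\<in>A. a - 1) = (\<Sum>a\<in>A. a) - int (card A)"
    by (simp add: sum_subtractf)
  moreover have "card A \<le> card V"
    using W fin by (metis card_mono)
  ultimately show ?thesis
    using sum_W sum_sdeg_tree[OF T, of s] card_sdeg_eq_0_le[OF T \<open>2 \<le> card V\<close>, of s] by linarith
qed

theorem mainTheorem10:
  fixes n :: nat and x :: "nat \<Rightarrow> int" and V :: "nat set" and E :: "nat set set"
    and s :: "nat set \<Rightarrow> bool"
  assumes "n \<ge> 1"
    and "inj_on x {1..n}"
    and "\<forall>i\<in>{1..n}. x i > 1"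
    and "optimal V E s ({1, 0} \<union> x ` {1..n})"
  shows "\<exists>!e. e \<in> E \<and> \<not> s e"
proof -
  define A where "A = x ` {1..n}"
  let ?Q = "{e \<in> E. \<not> s e}"
  have T: "is_tree V E" and img: "sdeg E s ` V = {1, 0} \<union> A"
    and opt: "card V = sigma ({1, 0} \<union> A)"
    using assms(4) by (auto simp: optimal_def realizes_def A_def)
  have A: "finite A" "\<forall>a\<in>A. 2 \<le> a"
    using assms(3) by (auto simp: A_def)
  have "card ({1, 0} :: int set) \<le> card (sdeg E s ` V)"
    using img A(1) by (intro card_mono) simp_all
  also have "\<dots> \<le> card V"
    using is_tree_finite[OF T] by (rule card_image_le)
  finally have two_le: "2 \<le> card V"
    by simp
  have "\<forall>d\<in>sdeg E s ` V. 0 \<le> d"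
    unfolding img using A(2) by auto
  then have "\<forall>v\<in>V. 0 \<le> sdeg E s v"
    by simp
  then have "(\<Sum>a\<in>A. a - 1) + 2 + 2 * int (card ?Q) \<le> int (card V)"
    using T two_le img by (intro is_tree_card_lower_bound) auto
  moreover have "int (card V) \<le> 4 + (\<Sum>a\<in>A. a - 1)"
    using opt sigma_upper_bound[OF A] by simp
  moreover obtain z where "z \<in> V" "sdeg E s z = 0"
    using img by (metis UnCI imageE insertCI)
  then have "?Q \<noteq> {}"
    using is_tree_sdeg_eq_0_imp_negative_edge[OF T two_le] by blast
  then have "1 \<le> card ?Q"
    using is_tree_finite_edges[OF T] by (simp add: Suc_le_eq card_gt_0_iff)
  ultimately have "card ?Q = 1"
    by linarith
  then obtain e where "?Q = {e}"
    by (rule card_1_singletonE)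
  then show ?thesis
    by blast
qed

end
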